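(* Let $\mathbb{F}$ be an algebraically closed field of characteristic $>3$. Then the COD of $\mathfrak{sl}_3(\mathbb{F})$ is unique up to conjugacy: any two CODs of $\mathfrak{sl}_3(\mathbb{F})$ are conjugate.
   Context: $\mathfrak{sl}_n(\mathbb{F})$ denotes the Lie algebra of $n\times n$ traceless matrices over $\mathbb{F}$. A Cartan subalgebra is a nilpotent self-normalizing subalgebra. A classical Cartan subalgebra of $\mathfrak{L}=\mathfrak{sl}_n(\mathbb{F})$ (with $\ell=\mathrm{char}\,\mathbb{F}$) is an abelian Cartan subalgebra $H$ such that: (a) $\mathfrak{L}=\bigoplus_\alpha \mathfrak{L}_\alpha$ with $\mathfrak{L}_\alpha=\{x: [x,h]=\alpha(h)x\ \forall h\in H\}$ over linear functionals $\alpha$ on $H$ (roots); (b) for each root $\alpha\ne0$, $[\mathfrak{L}_\alpha,\mathfrak{L}_{-\alpha}]$ is one-dimensional; (c) for roots $\alpha,\beta$ with $\beta\neq0$, not all $\alpha+k\beta$ ($1\le k\le \ell-1$) are roots. The Killing form is $K(A,B)=2n\,\mathrm{Tr}(AB)$. A COD of $\mathfrak{sl}_n(\mathbb{F})$ is a vector space decomposition $\mathfrak{sl}_n(\mathbb{F})=H_0\oplus\cdots\oplus H_n$ into classical Cartan subalgebras that are pairwise orthogonal with respect to $K$. Two CODs are conjugate if there is a Lie algebra automorphism of $\mathfrak{sl}_n(\mathbb{F})$ mapping each component of the first decomposition onto exactly one component of the second. *)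

theory Defs
  imports "HOL-Analysis.Analysis" "HOL-Computational_Algebra.Polynomial"
begin

definition smat :: "'a::field \<Rightarrow> 'a^'n^'n \<Rightarrow> 'a^'n^'n" where
  "smat c A = (\<chi> i j. c * A$i$j)"

definition lie :: "'a::field^'n^'n \<Rightarrow> 'a^'n^'n \<Rightarrow> 'a^'n^'n" where
  "lie A B = A ** B - B ** A"

definition sl :: "('a::field^'n^'n) set" where
  "sl = {A. trace A = 0}"

definition killing :: "'a::field^'n^'n \<Rightarrow> 'a^'n^'n \<Rightarrow> 'a" where
  "killing A B = 2 * of_nat CARD('n) * trace (A ** B)"

definition lspan :: "('a::field^'n^'n) set \<Rightarrow> ('a^'n^'n) set" where
  "lspan S = {(\<Sum>i<m. smat (c i) (v i)) | (m::nat) c v. \<forall>i<m. v i \<in> S}"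

definition one_dim :: "('a::field^'n^'n) set \<Rightarrow> bool" where
  "one_dim V \<longleftrightarrow> (\<exists>v. v \<noteq> 0 \<and> V = range (\<lambda>c. smat c v))"

definition subalg :: "('a::field^'n^'n) set \<Rightarrow> bool" where
  "subalg H \<longleftrightarrow> H \<subseteq> sl \<and> 0 \<in> H \<and> (\<forall>x\<in>H. \<forall>y\<in>H. x + y \<in> H)
     \<and> (\<forall>c. \<forall>x\<in>H. smat c x \<in> H) \<and> (\<forall>x\<in>H. \<forall>y\<in>H. lie x y \<in> H)"

fun brl :: "('a::field^'n^'n) list \<Rightarrow> 'a^'n^'n \<Rightarrow> 'a^'n^'n" where
  "brl [] y = y"
| "brl (x # xs) y = lie x (brl xs y)"

definition nilpotent_sub :: "('a::field^'n^'n) set \<Rightarrow> bool" where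
  "nilpotent_sub H \<longleftrightarrow> (\<exists>m. \<forall>xs y. length xs = m \<and> set xs \<subseteq> H \<and> y \<in> H \<longrightarrow> brl xs y = 0)"

definition self_normalizing :: "('a::field^'n^'n) set \<Rightarrow> bool" where
  "self_normalizing H \<longleftrightarrow> {x \<in> sl. \<forall>h\<in>H. lie x h \<in> H} = H"

definition cartan_sub :: "('a::field^'n^'n) set \<Rightarrow> bool" where
  "cartan_sub H \<longleftrightarrow> subalg H \<and> nilpotent_sub H \<and> self_normalizing H"

definition abelian_sub :: "('a::field^'n^'n) set \<Rightarrow> bool" where
  "abelian_sub H \<longleftrightarrow> (\<forall>x\<in>H. \<forall>y\<in>H. lie x y = 0)"

text \<open>Linear functionals on H, normalised to vanish outside H (so each functional on H
  has exactly one representative).\<close>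
definition lin_fun :: "('a::field^'n^'n) set \<Rightarrow> ('a^'n^'n \<Rightarrow> 'a) \<Rightarrow> bool" where
  "lin_fun H \<alpha> \<longleftrightarrow> (\<forall>x\<in>H. \<forall>y\<in>H. \<alpha> (x + y) = \<alpha> x + \<alpha> y)
     \<and> (\<forall>c. \<forall>x\<in>H. \<alpha> (smat c x) = c * \<alpha> x) \<and> (\<forall>x. x \<notin> H \<longrightarrow> \<alpha> x = 0)"

definition rootspace :: "('a::field^'n^'n) set \<Rightarrow> ('a^'n^'n \<Rightarrow> 'a) \<Rightarrow> ('a^'n^'n) set" where
  "rootspace H \<alpha> = {x \<in> sl. \<forall>h\<in>H. lie x h = smat (\<alpha> h) x}"

definition is_root :: "('a::field^'n^'n) set \<Rightarrow> ('a^'n^'n \<Rightarrow> 'a) \<Rightarrow> bool" where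
  "is_root H \<alpha> \<longleftrightarrow> lin_fun H \<alpha> \<and> rootspace H \<alpha> \<noteq> {0}"

definition root_decomp :: "('a::field^'n^'n) set \<Rightarrow> bool" where
  "root_decomp H \<longleftrightarrow> (\<forall>x\<in>sl. \<exists>!f. (\<forall>\<alpha>. f \<alpha> \<in> (if lin_fun H \<alpha> then rootspace H \<alpha> else {0}))
       \<and> finite {\<alpha>. f \<alpha> \<noteq> 0} \<and> x = (\<Sum>\<alpha>\<in>{\<alpha>. f \<alpha> \<noteq> 0}. f \<alpha>))"

definition classical_cartan :: "('a::field^'n^'n) set \<Rightarrow> bool" where
  "classical_cartan H \<longleftrightarrow> cartan_sub H \<and> abelian_sub H \<and> root_decomp H
     \<and> (\<forall>\<alpha>. is_root H \<alpha> \<and> \<alpha> \<noteq> (\<lambda>_. 0) \<longrightarrow>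
           one_dim (lspan {lie x y | x y. x \<in> rootspace H \<alpha> \<and> y \<in> rootspace H (\<lambda>h. - \<alpha> h)}))
     \<and> (\<forall>\<alpha> \<beta>. is_root H \<alpha> \<and> is_root H \<beta> \<and> \<beta> \<noteq> (\<lambda>_. 0) \<longrightarrow>
           \<not> (\<forall>k\<in>{1..CHAR('a) - 1}. is_root H (\<lambda>h. \<alpha> h + of_nat k * \<beta> h)))"

definition COD :: "(nat \<Rightarrow> ('a::field^'n^'n) set) \<Rightarrow> bool" where
  "COD H \<longleftrightarrow> (\<forall>i\<le>CARD('n). classical_cartan (H i))
     \<and> (\<forall>x\<in>sl. \<exists>!v. (\<forall>i\<le>CARD('n). v i \<in> H i) \<and> (\<forall>i>CARD('n). v i = 0)
                      \<and> x = (\<Sum>i\<le>CARD('n). v i))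
     \<and> (\<forall>i\<le>CARD('n). \<forall>j\<le>CARD('n). i \<noteq> j \<longrightarrow> (\<forall>x\<in>H i. \<forall>y\<in>H j. killing x y = 0))"

definition lie_automorphism :: "('a::field^'n^'n \<Rightarrow> 'a^'n^'n) \<Rightarrow> bool" where
  "lie_automorphism \<phi> \<longleftrightarrow> bij_betw \<phi> sl sl
     \<and> (\<forall>x\<in>sl. \<forall>y\<in>sl. \<phi> (x + y) = \<phi> x + \<phi> y)
     \<and> (\<forall>c. \<forall>x\<in>sl. \<phi> (smat c x) = smat c (\<phi> x))
     \<and> (\<forall>x\<in>sl. \<forall>y\<in>sl. \<phi> (lie x y) = lie (\<phi> x) (\<phi> y))"

definition COD_conjugate :: "(nat \<Rightarrow> ('a::field^'n^'n) set) \<Rightarrow> (nat \<Rightarrow> ('a^'n^'n) set) \<Rightarrow> bool" where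
  "COD_conjugate H H' \<longleftrightarrow> (\<exists>\<phi>. lie_automorphism \<phi> \<and>
     (\<forall>i\<le>CARD('n). \<exists>!j. j \<le> CARD('n) \<and> \<phi> ` H i = H' j))"

end

theory Submission
  imports Defs
begin

text \<open>
  A classical Cartan subalgebra H of sl_3 is a torus. A root vector m of H of nonzero weight has
  traceless powers, these being again weight vectors of nonzero weight, so m^3 = 0 by Cayley-Hamilton
  once the characteristic exceeds 3. The nonzero one among m, m^2 that squares to zero has rank one,
  and its image is a common eigenline of H. Root vectors map common eigenvectors to common
  eigenvectors and sl_3 moves any nonzero vector everywhere, so the root space decomposition yields
  a basis of common eigenvectors: H is conjugate to the traceless diagonal matrices D.

  A conjugate of D that is Killing-orthogonal to D has zero diagonal. For the conjugating matrix this
  forces relations among its entries whose only solutions involve a primitive cube root of unity,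
  and the torus is spanned by C and C^2, C a weighted cyclic shift with product of weights 1.
  A diagonal conjugation, which fixes D, normalises one of the three such tori of a COD to weights
  (1, 1, 1); orthogonality to it leaves for the other two only the weights (1, w, w^2) and
  (1, w^2, w) up to scale, and their mutual orthogonality makes them different. So every COD is
  conjugate to one standard COD up to the order of its components.
\<close>

type_synonym 'a m3 = "'a^3^3"

lemma two_three_nonzero_if_char_gt_3:
  assumes "CHAR('a::field) > 3"
  shows "(2::'a) \<noteq> 0" "(3::'a) \<noteq> 0"
proof -
  have "of_nat 2 \<noteq> (0::'a)" "of_nat 3 \<noteq> (0::'a)"
    using assms by (subst of_nat_eq_0_iff_char_dvd; auto dest: dvd_imp_le)+
  thus "(2::'a) \<noteq> 0" "(3::'a) \<noteq> 0" by simp_all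
qed

lemma smat_nth: "smat c A $ i $ j = c * A $ i $ j"
  by (simp add: smat_def)

lemma smat_mult_left: "smat c A ** B = smat c (A ** B)"
  by (simp add: smat_def matrix_matrix_mult_def vec_eq_iff sum_distrib_left mult.assoc)

lemma smat_mult_right: "A ** smat c B = smat c (A ** B)"
  by (simp add: smat_def matrix_matrix_mult_def vec_eq_iff sum_distrib_left mult.left_commute)

lemma smat_smat: "smat c (smat d A) = smat (c * d) A"
  by (simp add: smat_def vec_eq_iff mult.assoc)

lemma smat_add_scalar: "smat (c + d) A = smat c A + smat d A"
  by (simp add: smat_def vec_eq_iff distrib_right)

lemma smat_one [simp]: "smat 1 A = A"
  by (simp add: smat_def vec_eq_iff)

lemma smat_zero [simp]: "smat 0 A = 0"
  by (simp add: smat_def vec_eq_iff)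

lemma smat_mv: "smat c A *v x = c *s (A *v x)"
  by (simp add: smat_def matrix_vector_mult_def vec_eq_iff sum_distrib_left mult.assoc)

lemma sum_mv: "sum f S *v u = (\<Sum>a\<in>S. f a *v u)"
  by (induction S rule: infinite_finite_induct) (simp_all add: matrix_vector_mult_add_rdistrib)

lemma trace_zero [simp]: "trace 0 = 0"
  by (simp add: trace_def)

lemma trace_smat: "trace (smat c A) = c * trace A"
  by (simp add: smat_def trace_def sum_distrib_left)

lemma trace_lie: "trace (lie A B) = 0"
  unfolding lie_def trace_sub using trace_mul_sym[of A B] by simp

lemma matrix_add_rdistrib: "((A::'a::semiring_1^'n^'m) + B) ** C = A ** C + B ** C"
  by (simp add: matrix_matrix_mult_def vec_eq_iff distrib_right sum.distrib)

lemma matrix_diff_ldistrib: "(A::'a::ring_1^'n^'m) ** (B - C) = A ** B - A ** C"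
  by (simp add: matrix_matrix_mult_def vec_eq_iff right_diff_distrib sum_subtractf)

lemma matrix_diff_rdistrib: "((A::'a::ring_1^'n^'m) - B) ** C = A ** C - B ** C"
  by (simp add: matrix_matrix_mult_def vec_eq_iff left_diff_distrib sum_subtractf)

lemma lie_mult_left: "lie (A ** B) h = A ** lie B h + lie A h ** B"
  by (simp add: lie_def matrix_diff_ldistrib matrix_diff_rdistrib matrix_mul_assoc)

lemma lie_zero_left [simp]: "lie 0 h = 0"
  by (simp add: lie_def)

lemma lie_add_left: "lie (A + B) h = lie A h + lie B h"
  by (simp add: lie_def matrix_add_rdistrib matrix_add_ldistrib)

lemma lie_sum_left: "lie (sum f S) h = (\<Sum>a\<in>S. lie (f a) h)"
  by (induction S rule: infinite_finite_induct) (simp_all add: lie_add_left)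

lemma trace_weight_vector:
  assumes "lie y h = smat c y" "c \<noteq> 0"
  shows "trace y = 0"
  using trace_lie[of y h] assms by (simp add: trace_smat)

lemma weight_vector_square:
  assumes "lie m h = smat c m"
  shows "lie (m ** m) h = smat (2 * c) (m ** m)"
  using lie_mult_left[of m m h] assms
  by (simp add: smat_mult_left smat_mult_right smat_add_scalar[symmetric])

lemma weight_vector_cube:
  assumes "lie m h = smat c m"
  shows "lie (m ** m ** m) h = smat (3 * c) (m ** m ** m)"
  using lie_mult_left[of "m ** m" m h] assms weight_vector_square[OF assms]
  by (simp add: smat_mult_left smat_mult_right smat_add_scalar[symmetric] algebra_simps)

lemma inverse_mult:
  assumes "A ** A' = mat 1" "B ** B' = mat (1::'a::field)"
  shows "(A ** B) ** (B' ** A') = (mat 1 :: 'a^'n^'n)"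
  using assms by (metis matrix_mul_assoc matrix_mul_lid)

lemma conj_smat_add:
  fixes g g' A B :: "'a::field^'n^'n"
  shows "g ** (smat x A + smat y B) ** g' = smat x (g ** A ** g') + smat y (g ** B ** g')"
  by (simp add: matrix_add_ldistrib matrix_add_rdistrib smat_mult_left smat_mult_right)

lemma conj_mult:
  fixes g g' A B :: "'a::field^'n^'n"
  shows "g' ** g = mat 1 \<Longrightarrow> (g ** A ** g') ** (g ** B ** g') = g ** (A ** B) ** g'"
  by (metis matrix_mul_assoc matrix_mul_rid)

lemma conj_eq_of_mult_eq:
  fixes g g' X M :: "'a::field^'n^'n"
  shows "X ** g = g ** M \<Longrightarrow> g ** g' = mat 1 \<Longrightarrow> X = g ** M ** g'"
  by (metis matrix_mul_assoc matrix_mul_rid)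

lemma trace_conj:
  fixes g g' A :: "'a::field^'n^'n"
  shows "g' ** g = mat 1 \<Longrightarrow> trace (g ** A ** g') = trace A"
  by (metis matrix_mul_assoc matrix_mul_rid trace_mul_sym)

lemma image_conj_conj:
  fixes a a' b b' :: "'a::field^'n^'n"
  shows "(\<lambda>x. a ** x ** a') ` (\<lambda>x. b ** x ** b') ` S = (\<lambda>x. (a ** b) ** x ** (b' ** a')) ` S"
  by (simp add: image_image matrix_mul_assoc)

lemma image_conj_cancel:
  fixes g g' :: "'a::field^'n^'n"
  shows "g' ** g = mat 1 \<Longrightarrow> (\<lambda>x. g' ** x ** g) ` (\<lambda>x. g ** x ** g') ` S = S"
  by (simp add: image_conj_conj)

lemma image_conj_trace_orthogonal:
  fixes g g' :: "'a::field^'n^'n"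
  assumes "g' ** g = mat 1" "\<forall>x\<in>A. \<forall>y\<in>B. trace (x ** y) = 0"
  shows "\<forall>x\<in>(\<lambda>x. g ** x ** g') ` A. \<forall>y\<in>(\<lambda>x. g ** x ** g') ` B. trace (x ** y) = 0"
  using assms by (auto simp: conj_mult trace_conj)

lemma conj_lie_automorphism:
  fixes a a' :: "'a::field^'n^'n"
  assumes aa: "a ** a' = mat 1" "a' ** a = mat 1"
  shows "lie_automorphism (\<lambda>x. a ** x ** a')"
proof -
  have inv: "a' ** (a ** x ** a') ** a = x" for x
    by (metis aa(2) matrix_mul_assoc matrix_mul_lid matrix_mul_rid)
  have "(\<lambda>x. a ** x ** a') ` sl = sl"
  proof
    show "(\<lambda>x. a ** x ** a') ` sl \<subseteq> sl" using trace_conj[OF aa(2)] by (auto simp: sl_def)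
    show "sl \<subseteq> (\<lambda>x. a ** x ** a') ` sl"
    proof
      fix y :: "'a^'n^'n" assume "y \<in> sl"
      hence "a' ** y ** a \<in> sl" using trace_conj[OF aa(1)] by (simp add: sl_def)
      moreover have "y = a ** (a' ** y ** a) ** a'"
        by (metis aa(1) matrix_mul_assoc matrix_mul_lid matrix_mul_rid)
      ultimately show "y \<in> (\<lambda>x. a ** x ** a') ` sl" by blast
    qed
  qed
  moreover have "inj_on (\<lambda>x. a ** x ** a') sl"
    by (metis (no_types, lifting) inj_onI inv)
  moreover have "a ** (x + y) ** a' = a ** x ** a' + a ** y ** a'" for x y
    by (simp add: matrix_add_ldistrib matrix_add_rdistrib)
  moreover have "a ** smat c x ** a' = smat c (a ** x ** a')" for c x
    by (simp add: smat_mult_left smat_mult_right)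
  moreover have "a ** lie x y ** a' = lie (a ** x ** a') (a ** y ** a')" for x y
    by (simp add: lie_def matrix_diff_ldistrib matrix_diff_rdistrib conj_mult[OF aa(2)])
  ultimately show ?thesis
    unfolding lie_automorphism_def bij_betw_def by blast
qed

definition span2 :: "'a::field^'n^'n \<Rightarrow> 'a^'n^'n \<Rightarrow> ('a^'n^'n) set" where
  "span2 A B = {smat x A + smat y B | x y. True}"

lemma image_conj_span2:
  fixes g g' A B :: "'a::field^'n^'n"
  shows "(\<lambda>x. g ** x ** g') ` span2 A B = span2 (g ** A ** g') (g ** B ** g')"
proof
  show "(\<lambda>x. g ** x ** g') ` span2 A B \<subseteq> span2 (g ** A ** g') (g ** B ** g')"
    by (auto simp: span2_def conj_smat_add) blast
  show "span2 (g ** A ** g') (g ** B ** g') \<subseteq> (\<lambda>x. g ** x ** g') ` span2 A B"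
  proof
    fix y assume "y \<in> span2 (g ** A ** g') (g ** B ** g')"
    then obtain x z where "y = g ** (smat x A + smat z B) ** g'"
      by (auto simp: span2_def conj_smat_add)
    thus "y \<in> (\<lambda>x. g ** x ** g') ` span2 A B" by (auto simp: span2_def)
  qed
qed

lemma span2_scale:
  assumes "c \<noteq> 0" "d \<noteq> 0"
  shows "span2 (smat c A) (smat d B) = span2 A B"
proof
  show "span2 (smat c A) (smat d B) \<subseteq> span2 A B"
    by (auto simp: span2_def smat_smat)
  show "span2 A B \<subseteq> span2 (smat c A) (smat d B)"
  proof
    fix y assume "y \<in> span2 A B"
    then obtain x z where "y = smat x A + smat z B" by (auto simp: span2_def)
    hence "y = smat (x / c) (smat c A) + smat (z / d) (smat d B)" using assms by (simp add: smat_smat)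
    thus "y \<in> span2 (smat c A) (smat d B)" by (auto simp: span2_def)
  qed
qed

definition isdiag :: "'a::field^'n^'n \<Rightarrow> bool" where
  "isdiag A \<longleftrightarrow> (\<forall>i j. i \<noteq> j \<longrightarrow> A$i$j = 0)"

definition diag_mat :: "('n \<Rightarrow> 'a::field) \<Rightarrow> 'a^'n^'n" where
  "diag_mat c = (\<chi> i j. if i = j then c i else 0)"

lemma diag_mat_nth: "diag_mat c $ i $ j = (if i = j then c i else 0)"
  by (simp add: diag_mat_def)

lemma isdiag_mult_nth: "isdiag A \<Longrightarrow> (A ** B) $ i $ k = A$i$i * B$i$k"
proof -
  assume "isdiag A"
  hence "(\<Sum>j\<in>UNIV. A$i$j * B$j$k) = (\<Sum>j\<in>UNIV. if j = i then A$i$i * B$i$k else 0)"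
    by (intro sum.cong) (auto simp: isdiag_def)
  thus ?thesis by (simp add: matrix_matrix_mult_def)
qed

lemma isdiag_commute: "isdiag A \<Longrightarrow> isdiag B \<Longrightarrow> A ** B = B ** A"
  by (simp add: vec_eq_iff isdiag_mult_nth) (metis isdiag_def mult.commute mult_zero_left mult_zero_right)

lemma isdiag_diag_mat: "isdiag (diag_mat c)"
  by (simp add: isdiag_def diag_mat_def)

lemma mult_diag_mat_nth: "(A ** diag_mat c) $ i $ j = A$i$j * c j"
proof -
  have "(\<Sum>k\<in>UNIV. A$i$k * diag_mat c$k$j) = (\<Sum>k\<in>UNIV. if k = j then A$i$j * c j else 0)"
    by (intro sum.cong) (auto simp: diag_mat_def)
  thus ?thesis by (simp add: matrix_matrix_mult_def)
qed

lemma diag_mat_inverse: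
  "(\<forall>j. c j \<noteq> 0) \<Longrightarrow> diag_mat c ** diag_mat (\<lambda>j. 1 / c j) = mat 1"
  by (simp add: vec_eq_iff isdiag_mult_nth[OF isdiag_diag_mat]) (simp add: diag_mat_def mat_def)

definition diag_sl :: "('a::field^'n^'n) set" where
  "diag_sl = {A. isdiag A \<and> trace A = 0}"

lemma conj_diag_mat_diag_sl:
  assumes "\<forall>j. c j \<noteq> 0"
  shows "(\<lambda>x. diag_mat c ** x ** diag_mat (\<lambda>j. 1 / c j)) ` diag_sl = diag_sl"
proof -
  have "diag_mat c ** x ** diag_mat (\<lambda>j. 1 / c j) = x" if "x \<in> diag_sl" for x
  proof -
    have "isdiag x" using that by (simp add: diag_sl_def)
    hence "diag_mat c ** x = x ** diag_mat c" using isdiag_commute isdiag_diag_mat by blast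
    hence "diag_mat c ** x ** diag_mat (\<lambda>j. 1 / c j) = x ** (diag_mat c ** diag_mat (\<lambda>j. 1 / c j))"
      by (simp add: matrix_mul_assoc)
    thus ?thesis using diag_mat_inverse[OF assms] by simp
  qed
  thus ?thesis by force
qed

lemma mm3: "((A::'a::semiring_1^3^3) ** B) $ i $ j = A$i$1*B$1$j + A$i$2*B$2$j + A$i$3*B$3$j"
  by (simp add: matrix_matrix_mult_def sum_3)

lemma mv3: "((A::'a::semiring_1^3^3) *v x) $ i = A$i$1*x$1 + A$i$2*x$2 + A$i$3*x$3"
  by (simp add: matrix_vector_mult_def sum_3)

lemma tr3: "trace (A::'a::semiring_1^3^3) = A$1$1 + A$2$2 + A$3$3"
  by (simp add: trace_def sum_3)

text \<open>The second coefficient of the characteristic polynomial: the sum of the principal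
  $2 \times 2$ minors.\<close>
definition sigma2 :: "'a::field m3 \<Rightarrow> 'a" where
  "sigma2 m = m$1$1*m$2$2 - m$1$2*m$2$1 + m$1$1*m$3$3 - m$1$3*m$3$1 + m$2$2*m$3$3 - m$2$3*m$3$2"

lemma cayley_hamilton_3:
  fixes m :: "'a::field m3"
  shows "m ** m ** m = smat (trace m) (m ** m) - smat (sigma2 m) m + smat (det m) (mat 1)"
  unfolding vec_eq_iff forall_3 sigma2_def
  by (simp only: mm3 tr3 smat_nth det_3 vector_minus_component vector_add_component mat_def
      vec_lambda_beta; simp; algebra)

lemma trace_square_3: "trace (m ** m) = trace m ^ 2 - 2 * sigma2 (m::'a::field m3)"
  unfolding sigma2_def by (simp only: tr3 mm3; algebra)

lemma trace_cube_3: "trace (m ** m ** m) = trace m ^ 3 - 3 * trace m * sigma2 m + 3 * det (m::'a::field m3)"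
  unfolding sigma2_def by (simp only: tr3 mm3 det_3; algebra)

lemma cube_zero_if_power_traces_zero:
  fixes m :: "'a::field m3"
  assumes "trace m = 0" "trace (m ** m) = 0" "trace (m ** m ** m) = 0" "(2::'a) \<noteq> 0" "(3::'a) \<noteq> 0"
  shows "m ** m ** m = 0"
proof -
  have "sigma2 m = 0" using trace_square_3[of m] assms by simp
  moreover have "det m = 0" using trace_cube_3[of m] assms \<open>sigma2 m = 0\<close> by simp
  ultimately show ?thesis using cayley_hamilton_3[of m] assms by simp
qed

lemma minors_zero_if_square_zero:
  fixes m :: "'a::field m3"
  assumes t: "trace m = 0" and z: "m ** m = 0" and two: "(2::'a) \<noteq> 0"
  shows "m$i$k * m$j$l = m$i$l * m$j$k"
proof -
  have "sigma2 m = 0" using trace_square_3[of m] assms by simp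
  hence S: "m$1$1*m$2$2 - m$1$2*m$2$1 + m$1$1*m$3$3 - m$1$3*m$3$1 + m$2$2*m$3$3 - m$2$3*m$3$2 = 0"
    by (simp add: sigma2_def)
  have T: "m$1$1 + m$2$2 + m$3$3 = 0" using t by (simp add: tr3)
  have Z: "\<And>a b. m$a$1*m$1$b + m$a$2*m$2$b + m$a$3*m$3$b = 0"
    using z by (metis mm3 zero_index)
  have "\<forall>i j k l. m$i$k * m$j$l = m$i$l * m$j$k"
    unfolding forall_3
    using S T Z[of 1 1] Z[of 1 2] Z[of 1 3] Z[of 2 1] Z[of 2 2] Z[of 2 3] Z[of 3 1] Z[of 3 2] Z[of 3 3]
    by (intro conjI; ((simp add: mult.commute; fail) | algebra))
  thus ?thesis by blast
qed

lemma sl3_nonabelian: "\<exists>x\<in>sl. \<exists>y\<in>sl. lie x y \<noteq> (0::'a::field m3)"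
proof (intro bexI)
  let ?E12 = "(\<chi> i j. if i = 1 \<and> j = 2 then 1 else 0) :: 'a m3"
  let ?E21 = "(\<chi> i j. if i = 2 \<and> j = 1 then 1 else 0) :: 'a m3"
  have "lie ?E12 ?E21 $ 1 $ 1 \<noteq> 0" by (simp add: lie_def mm3)
  thus "lie ?E12 ?E21 \<noteq> 0" by auto
  show "?E12 \<in> sl" "?E21 \<in> sl" by (simp_all add: sl_def tr3)
qed

lemma sl3_mult_vector_span:
  assumes "(u::'a::field^3) \<noteq> 0"
  shows "vec.span ((\<lambda>z. z *v u) ` sl) = UNIV"
proof -
  obtain l where l: "u$l \<noteq> 0" using assms by (metis vec_eq_iff zero_index)
  define k where "k = l + 1"
  have kl: "k \<noteq> l" unfolding k_def using exhaust_3[of l] by auto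
  have "w \<in> vec.span ((\<lambda>z. z *v u) ` sl)" for w
  proof -
    \<comment> \<open>$z$ sends $u$ to $w$ up to a multiple of $e_k$, which $y$ supplies.\<close>
    define z :: "'a m3" where
      "z = (\<chi> r s. (if s = l then w$r / u$l else 0) - (if r = k \<and> s = k then w$l / u$l else 0))"
    define y :: "'a m3" where "y = (\<chi> r s. if r = k \<and> s = l then 1 / u$l else 0)"
    have sl: "z \<in> sl" "y \<in> sl" using kl exhaust_3[of l] exhaust_3[of k]
      by (auto simp: sl_def tr3 z_def y_def)
    have "w = z *v u + (w$l / u$l * u$k) *s (y *v u)"
      unfolding vec_eq_iff forall_3 using l kl exhaust_3[of l] exhaust_3[of k]
      by (auto simp: mv3 z_def y_def field_simps)
    moreover have "z *v u + (w$l / u$l * u$k) *s (y *v u) \<in> vec.span ((\<lambda>z. z *v u) ` sl)"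
      using sl by (intro vec.span_add vec.span_scale vec.span_base) auto
    ultimately show ?thesis by simp
  qed
  thus ?thesis by auto
qed

section \<open>Classical Cartan subalgebras of $\mathfrak{sl}_3$ are tori\<close>

lemma classical_cartan_sl: "classical_cartan H \<Longrightarrow> H \<subseteq> sl"
  by (simp add: classical_cartan_def cartan_sub_def subalg_def)

lemma classical_cartan_centralizer:
  assumes "classical_cartan H" "x \<in> sl" "\<forall>h\<in>H. lie x h = 0"
  shows "x \<in> H"
proof -
  have "subalg H" "self_normalizing H"
    using assms(1) unfolding classical_cartan_def cartan_sub_def by blast+
  hence "0 \<in> H" "{x \<in> sl. \<forall>h\<in>H. lie x h \<in> H} = H"
    unfolding subalg_def self_normalizing_def by blast+
  moreover have "x \<in> {x \<in> sl. \<forall>h\<in>H. lie x h \<in> H}" using assms(2,3) calculation(1) by simp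
  ultimately show ?thesis by simp
qed

lemma classical_cartan_root_decomposition:
  assumes "classical_cartan H" "x \<in> sl"
  obtains f where "\<And>\<alpha>. f \<alpha> \<noteq> 0 \<Longrightarrow> lin_fun H \<alpha> \<and> f \<alpha> \<in> rootspace H \<alpha>"
    and "x = (\<Sum>\<alpha>\<in>{\<alpha>. f \<alpha> \<noteq> 0}. f \<alpha>)"
proof -
  have "root_decomp H" using assms(1) unfolding classical_cartan_def by blast
  from ex1_implies_ex[OF bspec[OF this[unfolded root_decomp_def] assms(2)]]
  obtain f where f: "\<forall>\<alpha>. f \<alpha> \<in> (if lin_fun H \<alpha> then rootspace H \<alpha> else {0})"
    and "x = (\<Sum>\<alpha>\<in>{\<alpha>. f \<alpha> \<noteq> 0}. f \<alpha>)"
    by blast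
  moreover have "lin_fun H \<alpha> \<and> f \<alpha> \<in> rootspace H \<alpha>" if "f \<alpha> \<noteq> 0" for \<alpha>
    using f[rule_format, of \<alpha>] that by (auto split: if_splits)
  ultimately show ?thesis using that by blast
qed

lemma classical_cartan_root_vector:
  fixes H :: "'a::field m3 set"
  assumes cc: "classical_cartan H"
  obtains m \<alpha> h where "m \<noteq> 0" "m \<in> rootspace H \<alpha>" "h \<in> H" "\<alpha> h \<noteq> 0"
proof -
  have "\<exists>m \<alpha> h. m \<noteq> 0 \<and> m \<in> rootspace H \<alpha> \<and> h \<in> H \<and> \<alpha> h \<noteq> 0"
  proof (rule ccontr)
    assume none: "\<not> ?thesis"
    have "x \<in> H" if x: "x \<in> sl" for x
    proof -
      obtain f where f: "\<And>\<alpha>. f \<alpha> \<noteq> 0 \<Longrightarrow> lin_fun H \<alpha> \<and> f \<alpha> \<in> rootspace H \<alpha>"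
        and x_sum: "x = (\<Sum>\<alpha>\<in>{\<alpha>. f \<alpha> \<noteq> 0}. f \<alpha>)"
        using classical_cartan_root_decomposition[OF cc x] by blast
      have "lie (f \<alpha>) h = 0" if "f \<alpha> \<noteq> 0" "h \<in> H" for \<alpha> h
      proof -
        have "\<alpha> h = 0" using f[OF that(1)] none that by blast
        thus ?thesis using f[OF that(1)] that(2) by (simp add: rootspace_def)
      qed
      hence "\<forall>h\<in>H. lie x h = 0" by (simp add: x_sum lie_sum_left)
      thus ?thesis using classical_cartan_centralizer[OF cc x] by blast
    qed
    moreover have "abelian_sub H" using cc by (simp add: classical_cartan_def)
    ultimately show False using sl3_nonabelian by (auto simp: abelian_sub_def)
  qed
  thus ?thesis using that by blast
qed

definition common_eigvecs :: "('a::field^'n^'n) set \<Rightarrow> ('a^'n) set" where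
  "common_eigvecs H = {v. \<forall>h\<in>H. \<exists>c. h *v v = c *s v}"

lemma rank_one_weight_vector_common_eigvec:
  fixes M :: "'a::field m3"
  assumes nz: "M \<noteq> 0" and minors: "\<And>i j k l. M$i$k * M$j$l = M$i$l * M$j$k"
    and weight: "\<forall>h\<in>H. lie M h = smat (\<beta> h) M"
  obtains u where "u \<noteq> 0" "u \<in> common_eigvecs H"
proof -
  obtain i j where ij: "M$i$j \<noteq> 0" using nz by (metis vec_eq_iff zero_index)
  \<comment> \<open>A nonzero column spans the image of the rank one matrix $M$, which every $h \in H$ preserves.\<close>
  define u where "u = (\<chi> r. M$r$j)"
  have "u \<noteq> 0" using ij by (metis u_def vec_lambda_beta zero_index)
  moreover have "u \<in> common_eigvecs H"
    unfolding common_eigvecs_def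
  proof (intro CollectI ballI)
    fix h assume h: "h \<in> H"
    define c where "c = (M$i$1*h$1$j + M$i$2*h$2$j + M$i$3*h$3$j) / M$i$j - \<beta> h"
    have cM: "c * M$i$j = M$i$1*h$1$j + M$i$2*h$2$j + M$i$3*h$3$j - \<beta> h * M$i$j"
      using ij by (simp add: c_def field_simps)
    have "(h *v u) $ r = (c *s u) $ r" for r
    proof -
      have L: "M$r$1*h$1$j + M$r$2*h$2$j + M$r$3*h$3$j - (h$r$1*M$1$j + h$r$2*M$2$j + h$r$3*M$3$j)
          = \<beta> h * M$r$j"
        using arg_cong[OF weight[rule_format, OF h], of "\<lambda>X. X$r$j"] by (simp add: lie_def mm3 smat_nth)
      have "M$r$1*M$i$j = M$r$j*M$i$1" "M$r$2*M$i$j = M$r$j*M$i$2" "M$r$3*M$i$j = M$r$j*M$i$3"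
        using minors by blast+
      hence "(h$r$1*M$1$j + h$r$2*M$2$j + h$r$3*M$3$j) * M$i$j = (c * M$r$j) * M$i$j"
        using L cM by algebra
      hence "h$r$1*M$1$j + h$r$2*M$2$j + h$r$3*M$3$j = c * M$r$j" using ij by simp
      thus ?thesis by (simp add: mv3 u_def)
    qed
    hence "h *v u = c *s u" by (simp add: vec_eq_iff)
    thus "\<exists>c. h *v u = c *s u" by blast
  qed
  ultimately show ?thesis using that by blast
qed

lemma classical_cartan_common_eigvec:
  fixes H :: "'a::field m3 set"
  assumes cc: "classical_cartan H" and two: "(2::'a) \<noteq> 0" and three: "(3::'a) \<noteq> 0"
  obtains u where "u \<noteq> 0" "u \<in> common_eigvecs H"
proof -
  obtain m \<alpha> h0 where m: "m \<noteq> 0" "m \<in> rootspace H \<alpha>" "h0 \<in> H" "\<alpha> h0 \<noteq> 0"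
    using classical_cartan_root_vector[OF cc] by blast
  have w: "\<forall>h\<in>H. lie m h = smat (\<alpha> h) m" using m(2) by (simp add: rootspace_def)
  have w0: "lie m h0 = smat (\<alpha> h0) m" using w m(3) by blast
  \<comment> \<open>The powers of $m$ are weight vectors of the nonzero weights $2\alpha$, $3\alpha$.\<close>
  have t1: "trace m = 0" using trace_weight_vector[OF w0] m(4) by blast
  have t2: "trace (m ** m) = 0" using trace_weight_vector[OF weight_vector_square[OF w0]] m(4) two by simp
  have t3: "trace (m ** m ** m) = 0" using trace_weight_vector[OF weight_vector_cube[OF w0]] m(4) three by simp
  have cube: "m ** m ** m = 0" using cube_zero_if_power_traces_zero[OF t1 t2 t3 two three] .
  show ?thesis
  proof (cases "m ** m = 0")
    case True
    show ?thesis
      using rank_one_weight_vector_common_eigvec[OF m(1) minors_zero_if_square_zero[OF t1 True two] w] that .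
  next
    case False
    have sq: "(m ** m) ** (m ** m) = 0" using cube by (metis matrix_mul_assoc times0_left)
    have "\<forall>h\<in>H. lie (m ** m) h = smat (2 * \<alpha> h) (m ** m)" using w weight_vector_square by blast
    from rank_one_weight_vector_common_eigvec[OF False minors_zero_if_square_zero[OF t2 sq two] this]
    show ?thesis using that .
  qed
qed

lemma rootspace_mult_common_eigvec:
  assumes u: "u \<in> common_eigvecs H" and y: "y \<in> rootspace H \<gamma>"
  shows "y *v u \<in> common_eigvecs H"
  unfolding common_eigvecs_def
proof (intro CollectI ballI)
  fix h assume h: "h \<in> H"
  obtain c where c: "h *v u = c *s u" using u h by (auto simp: common_eigvecs_def)
  have hy: "h ** y = y ** h - smat (\<gamma> h) y" using y h by (simp add: rootspace_def lie_def algebra_simps)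
  have "h *v (y *v u) = (h ** y) *v u" by (simp add: matrix_vector_mul_assoc)
  also have "\<dots> = y *v (h *v u) - \<gamma> h *s (y *v u)"
    by (simp add: hy matrix_vector_mult_diff_rdistrib smat_mv matrix_vector_mul_assoc)
  also have "\<dots> = (c - \<gamma> h) *s (y *v u)" by (simp add: c vector_scalar_commute vector_sub_rdistrib)
  finally show "\<exists>c. h *v (y *v u) = c *s (y *v u)" by blast
qed

lemma classical_cartan_common_eigvecs_span:
  fixes H :: "'a::field m3 set"
  assumes cc: "classical_cartan H" and u: "u \<noteq> 0" "u \<in> common_eigvecs H"
  shows "vec.span (common_eigvecs H) = UNIV"
proof -
  have "z *v u \<in> vec.span (common_eigvecs H)" if z: "z \<in> sl" for z
  proof -
    obtain f where f: "\<And>\<alpha>. f \<alpha> \<noteq> 0 \<Longrightarrow> lin_fun H \<alpha> \<and> f \<alpha> \<in> rootspace H \<alpha>"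
      and z_sum: "z = (\<Sum>\<alpha>\<in>{\<alpha>. f \<alpha> \<noteq> 0}. f \<alpha>)"
      using classical_cartan_root_decomposition[OF cc z] by blast
    have "(\<Sum>\<alpha>\<in>{\<alpha>. f \<alpha> \<noteq> 0}. f \<alpha> *v u) \<in> vec.span (common_eigvecs H)"
      using f rootspace_mult_common_eigvec[OF u(2)] by (intro vec.span_sum vec.span_base) blast
    thus ?thesis by (simp add: z_sum sum_mv)
  qed
  hence "vec.span ((\<lambda>z. z *v u) ` sl) \<subseteq> vec.span (common_eigvecs H)"
    by (intro vec.span_minimal[OF _ vec.subspace_span]) auto
  thus ?thesis using sl3_mult_vector_span[OF u(1)] by auto
qed

lemma invertible_with_columns_in:
  fixes E :: "('a::field^'n) set"
  assumes "vec.span E = UNIV"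
  obtains g :: "'a^'n^'n" where "invertible g" "\<And>j. column j g \<in> E"
proof -
  obtain B where B: "B \<subseteq> E" "vec.independent B" "E \<subseteq> vec.span B"
    using vec.maximal_independent_subset[of E] by blast
  have span: "vec.span B = UNIV"
    using assms vec.span_mono[OF B(3)] by (auto simp: vec.span_span)
  have fin: "finite B" using B(2) vec.finiteI_independent by blast
  have "card B = vec.dim B" using vec.dim_eq_card_independent[OF B(2)] by simp
  also have "\<dots> = vec.dim (UNIV :: ('a^'n) set)" using span vec.dim_span[of B] by simp
  also have "\<dots> = CARD('n)" by (simp add: card_cart_basis)
  finally have "card (UNIV :: 'n set) = card B" by simp
  then obtain f where f: "bij_betw f (UNIV :: 'n set) B"
    using finite_same_card_bij[OF finite fin] by blast
  define g :: "'a^'n^'n" where "g = (\<chi> i j. f j $ i)"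
  have col: "column j g = f j" for j by (simp add: g_def column_def vec_eq_iff)
  have "columns g = B" using f by (auto simp: columns_def col bij_betw_def)
  hence "invertible g"
    using matrix_right_invertible_span_columns[of g] span invertible_right_inverse by auto
  moreover have "column j g \<in> E" for j using f B(1) by (auto simp: col bij_betw_def)
  ultimately show ?thesis using that by blast
qed

lemma mult_eq_diag_mat_if_eigen_columns:
  assumes "\<And>j. h *v column j g = c j *s column j g"
  shows "h ** g = g ** diag_mat c"
proof -
  have "(h ** g) $ i $ j = (h *v column j g) $ i" for i j
    by (simp add: matrix_matrix_mult_def matrix_vector_mult_def column_def)
  thus ?thesis using assms by (simp add: vec_eq_iff mult_diag_mat_nth column_def mult.commute)
qed

lemma classical_cartan_conj_diag_sl:
  fixes H :: "'a::field m3 set"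
  assumes cc: "classical_cartan H" and two: "(2::'a) \<noteq> 0" and three: "(3::'a) \<noteq> 0"
  obtains g g' :: "'a m3" where "g ** g' = mat 1" "g' ** g = mat 1" "H = (\<lambda>d. g ** d ** g') ` diag_sl"
proof -
  obtain u where u: "u \<noteq> 0" "u \<in> common_eigvecs H"
    using classical_cartan_common_eigvec[OF cc two three] by blast
  obtain g :: "'a m3" where g: "invertible g" "\<And>j. column j g \<in> common_eigvecs H"
    using invertible_with_columns_in[OF classical_cartan_common_eigvecs_span[OF cc u]] by blast
  obtain g' where gg: "g ** g' = mat 1" "g' ** g = mat 1" using g(1) by (auto simp: invertible_def)
  have conj_diag: "\<exists>d\<in>diag_sl. h = g ** d ** g'" if h: "h \<in> H" for h
  proof -
    have "\<forall>j. \<exists>c. h *v column j g = c *s column j g" using g(2) h by (auto simp: common_eigvecs_def)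
    then obtain c where "\<And>j. h *v column j g = c j *s column j g" by metis
    hence h_eq: "h = g ** diag_mat c ** g'"
      using conj_eq_of_mult_eq[OF mult_eq_diag_mat_if_eigen_columns gg(1)] by blast
    have "trace (diag_mat c) = trace h" using trace_conj[OF gg(2)] h_eq by simp
    also have "\<dots> = 0" using h classical_cartan_sl[OF cc] by (auto simp: sl_def)
    finally have "diag_mat c \<in> diag_sl" by (simp add: diag_sl_def isdiag_diag_mat)
    thus ?thesis using h_eq by blast
  qed
  \<comment> \<open>Conversely the conjugated diagonal matrices centralise $H$, which is self-centralising.\<close>
  have "g ** d ** g' \<in> H" if d: "d \<in> diag_sl" for d
  proof (rule classical_cartan_centralizer[OF cc])
    show "g ** d ** g' \<in> sl" using d trace_conj[OF gg(2)] by (simp add: sl_def diag_sl_def)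
    show "\<forall>h\<in>H. lie (g ** d ** g') h = 0"
    proof
      fix h assume "h \<in> H"
      then obtain e where e: "e \<in> diag_sl" "h = g ** e ** g'" using conj_diag by blast
      have "d ** e = e ** d" using d e isdiag_commute by (auto simp: diag_sl_def)
      thus "lie (g ** d ** g') h = 0" by (simp add: e(2) lie_def conj_mult[OF gg(2)])
    qed
  qed
  hence "H = (\<lambda>d. g ** d ** g') ` diag_sl" using conj_diag by blast
  thus ?thesis using that gg by blast
qed

section \<open>Tori orthogonal to the diagonal torus\<close>

text \<open>The weighted cyclic shift $e_1 \mapsto s_1 e_2$, $e_2 \mapsto s_2 e_3$, $e_3 \mapsto s_3 e_1$.\<close>
definition cyc :: "(3 \<Rightarrow> 'a::field) \<Rightarrow> 'a m3" where
  "cyc s = (\<chi> i j. if i = j + 1 then s j else 0)"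

definition cyc_torus :: "(3 \<Rightarrow> 'a::field) \<Rightarrow> 'a m3 set" where
  "cyc_torus s = span2 (cyc s) (cyc s ** cyc s)"

lemma cyc_nth:
  "cyc s $1$1 = 0" "cyc s $1$2 = 0" "cyc s $1$3 = s 3"
  "cyc s $2$1 = s 1" "cyc s $2$2 = 0" "cyc s $2$3 = 0"
  "cyc s $3$1 = 0" "cyc s $3$2 = s 2" "cyc s $3$3 = 0"
  by (simp_all add: cyc_def)

lemma diag_sl_generators:
  "diag_mat (\<lambda>i. if i = 1 then 1 else if i = 2 then -1 else 0) \<in> (diag_sl :: 'a::field m3 set)"
  "diag_mat (\<lambda>i. if i = 1 then 0 else if i = 2 then 1 else -1) \<in> (diag_sl :: 'a::field m3 set)"
  by (simp_all add: diag_sl_def isdiag_diag_mat tr3 diag_mat_nth)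

lemma trace_orthogonal_diag_sl_zero_diagonal:
  fixes x :: "'a::field m3"
  assumes orth: "\<forall>d\<in>diag_sl. trace (x ** d) = 0" and "trace x = 0" "(3::'a) \<noteq> 0"
  shows "x$k$k = 0"
proof -
  have "x$1$1 - x$2$2 = 0" "x$2$2 - x$3$3 = 0"
    using orth diag_sl_generators by (force simp: tr3 mm3 diag_mat_nth)+
  moreover have "x$1$1 + x$2$2 + x$3$3 = 0" using assms(2) by (simp add: tr3)
  ultimately have "3 * x$1$1 = 0" "x$2$2 = x$1$1" "x$3$3 = x$2$2" by algebra+
  thus ?thesis using assms(3) exhaust_3[of k] by auto
qed

lemma zero_diagonal_conj_diag_sl_entries:
  fixes g g' :: "'a::field m3"
  assumes gg: "g ** g' = mat 1" and zero: "\<forall>d\<in>diag_sl. \<forall>k. (g ** d ** g')$k$k = 0"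
    and three: "(3::'a) \<noteq> 0"
  shows "g$k$i * g'$i$k = 1/3"
proof -
  have "g$k$1 * g'$1$k - g$k$2 * g'$2$k = 0" "g$k$2 * g'$2$k - g$k$3 * g'$3$k = 0"
    using zero diag_sl_generators by (force simp: mm3 diag_mat_nth)+
  moreover have "g$k$1 * g'$1$k + g$k$2 * g'$2$k + g$k$3 * g'$3$k = 1"
    using arg_cong[OF gg, of "\<lambda>X. X$k$k"] by (simp add: mm3 mat_def)
  ultimately have "g$k$1 * g'$1$k = 1/3" "g$k$2 * g'$2$k = 1/3" "g$k$3 * g'$3$k = 1/3"
    using three by (simp_all add: field_simps)
  thus ?thesis using exhaust_3[of i] by auto
qed

lemma inverse_with_third_products_row_relation:
  fixes g g' :: "'a::field m3"
  assumes gg: "g ** g' = mat 1" and third: "\<And>k i. g$k$i * g'$i$k = 1/3"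
    and three: "(3::'a) \<noteq> 0" and "k \<noteq> l"
  shows "g$k$1 / g$l$1 + g$k$2 / g$l$2 + g$k$3 / g$l$3 = 0"
proof -
  have nz: "g$k$i \<noteq> 0" for k i using third[of k i] three by auto
  have "g'$i$k = 1 / (3 * g$k$i)" for k i using third[of k i] nz[of k i] three by (simp add: field_simps)
  moreover have "(g ** g')$k$l = 0" using gg \<open>k \<noteq> l\<close> by (simp add: mat_def)
  ultimately have "g$k$1 / (3 * g$l$1) + g$k$2 / (3 * g$l$2) + g$k$3 / (3 * g$l$3) = 0" by (simp add: mm3)
  thus ?thesis using three nz[of l 1] nz[of l 2] nz[of l 3] by (simp add: field_simps)
qed

lemma cube_root_relations:
  fixes a b c d :: "'a::field"
  assumes nz: "a \<noteq> 0" "b \<noteq> 0" "c \<noteq> 0" "d \<noteq> 0" and three: "(3::'a) \<noteq> 0"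
    and r1: "1 + a + b = 0" and r2: "1 + 1/a + 1/b = 0" and r3: "1 + c + d = 0" and r4: "1 + 1/c + 1/d = 0"
    and r5: "1 + a/c + b/d = 0"
  shows "a*a + a + 1 = 0" "b = a*a" "c = a*a" "d = a"
proof -
  have ab: "a*b = 1" using r1 r2 nz by (simp add: field_simps) algebra
  have cd: "c*d = 1" using r3 r4 nz by (simp add: field_simps) algebra
  show qa: "a*a + a + 1 = 0" using ab r1 by algebra
  show b: "b = a*a" using ab r1 by algebra
  have qc: "c*c + c + 1 = 0" using cd r3 by algebra
  have dc: "d = c*c" using cd r3 by algebra
  have "(c - a) * (c - a*a) = 0" using qa qc by algebra
  moreover have "c \<noteq> a"
  proof
    assume "c = a"
    hence "d = b" using dc b by simp
    hence "(3::'a) = 0" using r5 \<open>c = a\<close> nz by (simp add: field_simps)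
    thus False using three by simp
  qed
  ultimately show c: "c = a*a" by simp
  show "d = a" using dc c qa by algebra
qed

definition root_diag :: "'a::field \<Rightarrow> 'a m3" where
  "root_diag a = diag_mat (\<lambda>i. if i = 1 then 1 else if i = 2 then a * a else a)"

lemma conj_zero_diagonal_cyc:
  fixes g g' :: "'a::field m3"
  assumes gg: "g ** g' = mat 1" and third: "\<And>k i. g$k$i * g'$i$k = 1/3" and three: "(3::'a) \<noteq> 0"
  obtains r a where "r 1 * r 2 * r 3 = 1" "a*a + a + 1 = 0" "cyc r ** g = g ** root_diag a"
proof -
  have nz: "g$k$i \<noteq> 0" for k i using third[of k i] three by auto
  note R = inverse_with_third_products_row_relation[OF gg third three]
  \<comment> \<open>In these cross ratios the row relations become the hypotheses of cube_root_relations.\<close>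
  define a where "a = g$2$2*g$1$1 / (g$2$1*g$1$2)"
  define b where "b = g$2$3*g$1$1 / (g$2$1*g$1$3)"
  define c where "c = g$3$2*g$1$1 / (g$3$1*g$1$2)"
  define d where "d = g$3$3*g$1$1 / (g$3$1*g$1$3)"
  have nzabcd: "a \<noteq> 0" "b \<noteq> 0" "c \<noteq> 0" "d \<noteq> 0" using nz by (simp_all add: a_def b_def c_def d_def)
  have "1 + a + b = 0"
    using R[of 2 1] nz by (simp add: a_def b_def field_simps; simp add: algebra_simps)
  moreover have "1 + 1/a + 1/b = 0"
    using R[of 1 2] nz by (simp add: a_def b_def field_simps; simp add: algebra_simps)
  moreover have "1 + c + d = 0"
    using R[of 3 1] nz by (simp add: c_def d_def field_simps; simp add: algebra_simps)
  moreover have "1 + 1/c + 1/d = 0"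
    using R[of 1 3] nz by (simp add: c_def d_def field_simps; simp add: algebra_simps)
  moreover have "1 + a/c + b/d = 0"
    using R[of 2 3] nz by (simp add: a_def b_def c_def d_def field_simps; simp add: algebra_simps)
  ultimately have qa: "a*a + a + 1 = 0" and b: "b = a*a" and c: "c = a*a" and d: "d = a"
    using cube_root_relations[OF nzabcd three] by simp_all
  have e: "g$2$2 * g$1$1 = a * g$2$1 * g$1$2" "g$2$3 * g$1$1 = a*a * g$2$1 * g$1$3"
    "g$3$2 * g$1$1 = a*a * g$3$1 * g$1$2" "g$3$3 * g$1$1 = a * g$3$1 * g$1$3"
    using nz b c d by (simp_all add: a_def b_def c_def d_def field_simps)
  define r where "r = (\<lambda>j::3. if j = 1 then g$2$1/g$1$1 else if j = 2 then g$3$1/g$2$1 else g$1$1/g$3$1)"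
  have "r 1 * r 2 * r 3 = 1" using nz by (simp add: r_def)
  moreover have "cyc r ** g = g ** root_diag a"
    unfolding vec_eq_iff forall_3
    apply (simp add: mm3 cyc_nth diag_mat_nth r_def root_diag_def)
    using nz[of 1 1] nz[of 2 1] nz[of 3 1] nz[of 1 2] nz[of 1 3] e qa
    by (intro conjI; simp add: field_simps; algebra)
  ultimately show ?thesis using that qa by blast
qed

lemma diag_sl_eq_span2_root_diag:
  fixes a :: "'a::field"
  assumes qa: "a*a + a + 1 = 0" and three: "(3::'a::field) \<noteq> 0"
  shows "diag_sl = span2 (root_diag a) (root_diag a ** root_diag a)"
proof
  show "span2 (root_diag a) (root_diag a ** root_diag a) \<subseteq> diag_sl"
  proof
    fix y assume "y \<in> span2 (root_diag a) (root_diag a ** root_diag a)"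
    then obtain x z where y: "y = smat x (root_diag a) + smat z (root_diag a ** root_diag a)"
      by (auto simp: span2_def)
    have "trace y = x * (a*a + a + 1) + z * ((a*a + a + 1) * (a*a - a + 1))"
      by (simp add: y tr3 mm3 diag_mat_nth smat_nth root_diag_def) algebra
    thus "y \<in> diag_sl" using qa
      by (simp add: diag_sl_def isdiag_def y forall_3 mm3 diag_mat_nth smat_nth root_diag_def)
  qed
  show "diag_sl \<subseteq> span2 (root_diag a) (root_diag a ** root_diag a)"
  proof
    fix d :: "'a m3" assume d: "d \<in> diag_sl"
    \<comment> \<open>Inverting the Vandermonde system for the eigenvalues $(1, a^2, a)$ and $(1, a, a^2)$.\<close>
    define x where "x = (d$1$1 + a*d$2$2 + a*a*d$3$3) / 3"
    define z where "z = (d$1$1 + a*a*d$2$2 + a*d$3$3) / 3"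
    have tr: "d$1$1 + d$2$2 + d$3$3 = 0" using d by (simp add: diag_sl_def tr3)
    have s1: "3 * d$1$1 = (d$1$1 + a*d$2$2 + a*a*d$3$3) + (d$1$1 + a*a*d$2$2 + a*d$3$3)"
      using tr qa by algebra
    have s2: "d$2$2 * 3 = (d$1$1 + a*d$2$2 + a*a*d$3$3) * (a*a) + (d$1$1 + a*a*d$2$2 + a*d$3$3) * (a*a*(a*a))"
      using tr qa by algebra
    have s3: "d$3$3 * 3 = (d$1$1 + a*d$2$2 + a*a*d$3$3) * a + (d$1$1 + a*a*d$2$2 + a*d$3$3) * (a*a)"
      using tr qa by algebra
    have "d$1$1 = x + z" using s1 three by (simp add: x_def z_def add_divide_distrib[symmetric])
    moreover have "d$2$2 = x * (a*a) + z * (a*a*(a*a))"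
      using s2 three by (simp add: x_def z_def add_divide_distrib[symmetric])
    moreover have "d$3$3 = x * a + z * (a*a)"
      using s3 three by (simp add: x_def z_def add_divide_distrib[symmetric])
    moreover have "d$i$j = 0" if "i \<noteq> j" for i j using d that by (simp add: diag_sl_def isdiag_def)
    ultimately have "d = smat x (root_diag a) + smat z (root_diag a ** root_diag a)"
      unfolding vec_eq_iff forall_3 by (simp add: mm3 diag_mat_nth smat_nth root_diag_def)
    thus "d \<in> span2 (root_diag a) (root_diag a ** root_diag a)" by (auto simp: span2_def)
  qed
qed

lemma orthogonal_conj_diag_sl_cyc_torus:
  fixes g g' :: "'a::field m3"
  assumes gg: "g ** g' = mat 1" "g' ** g = mat 1" and three: "(3::'a) \<noteq> 0"
    and orth: "\<forall>x\<in>(\<lambda>d. g ** d ** g') ` diag_sl. \<forall>y\<in>diag_sl. trace (x ** y) = 0"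
  obtains r where "r 1 * r 2 * r 3 = 1" "(\<lambda>d. g ** d ** g') ` diag_sl = cyc_torus r"
proof -
  have "\<forall>d\<in>diag_sl. \<forall>k. (g ** d ** g')$k$k = 0"
  proof (intro ballI allI)
    fix d :: "'a m3" and k assume d: "d \<in> diag_sl"
    have "trace (g ** d ** g') = 0" using trace_conj[OF gg(2)] d by (simp add: diag_sl_def)
    thus "(g ** d ** g')$k$k = 0"
      using trace_orthogonal_diag_sl_zero_diagonal orth d three by blast
  qed
  then obtain r a where r: "r 1 * r 2 * r 3 = 1" and qa: "a*a + a + 1 = 0"
    and shift: "cyc r ** g = g ** root_diag a"
    using conj_zero_diagonal_cyc[OF gg(1) zero_diagonal_conj_diag_sl_entries[OF gg(1) _ three] three]
    by blast
  have "cyc r = g ** root_diag a ** g'" using conj_eq_of_mult_eq[OF shift gg(1)] .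
  hence "(\<lambda>d. g ** d ** g') ` diag_sl = cyc_torus r"
    by (simp add: diag_sl_eq_span2_root_diag[OF qa three] image_conj_span2 cyc_torus_def
        conj_mult[OF gg(2)])
  thus ?thesis using that r by blast
qed

section \<open>The standard orthogonal decomposition\<close>

definition cyc_pairing :: "(3 \<Rightarrow> 'a::field) \<Rightarrow> (3 \<Rightarrow> 'a) \<Rightarrow> 'a" where
  "cyc_pairing s t = s 3 * t 1 * t 2 + s 1 * t 2 * t 3 + s 2 * t 3 * t 1"

lemma trace_cyc_mult_cyc_square: "trace (cyc s ** (cyc t ** cyc t)) = cyc_pairing s t"
  by (simp add: tr3 mm3 cyc_nth cyc_pairing_def; algebra)

lemma trace_cyc_square_mult_cyc: "trace ((cyc s ** cyc s) ** cyc t) = cyc_pairing t s"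
  by (simp add: tr3 mm3 cyc_nth cyc_pairing_def; algebra)

lemma cyc_mem_cyc_torus: "cyc s \<in> cyc_torus s" "cyc s ** cyc s \<in> cyc_torus s"
proof -
  have "cyc s = smat 1 (cyc s) + smat 0 (cyc s ** cyc s)"
    "cyc s ** cyc s = smat 0 (cyc s) + smat 1 (cyc s ** cyc s)" by simp_all
  thus "cyc s \<in> cyc_torus s" "cyc s ** cyc s \<in> cyc_torus s"
    unfolding cyc_torus_def span2_def by blast+
qed

lemma cyc_torus_orthogonal_pairing:
  assumes "\<forall>x\<in>cyc_torus s. \<forall>y\<in>cyc_torus t. trace (x ** y) = 0"
  shows "cyc_pairing s t = 0" "cyc_pairing t s = 0"
  using assms cyc_mem_cyc_torus trace_cyc_mult_cyc_square trace_cyc_square_mult_cyc by metis+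

lemma cyc_torus_not_self_orthogonal:
  fixes s :: "3 \<Rightarrow> 'a::field"
  assumes "\<forall>x\<in>cyc_torus s. \<forall>y\<in>cyc_torus s. trace (x ** y) = 0"
    and "s 1 * s 2 * s 3 = 1" and "(3::'a) \<noteq> 0"
  shows False
proof -
  have "cyc_pairing s s = 3 * (s 1 * s 2 * s 3)" by (simp add: cyc_pairing_def algebra_simps)
  thus False using cyc_torus_orthogonal_pairing(1)[OF assms(1)] assms(2,3) by simp
qed

lemma cyc_torus_zero_diagonal: "x \<in> cyc_torus s \<Longrightarrow> x$k$k = 0"
  unfolding cyc_torus_def span2_def using exhaust_3[of k] by (auto simp: mm3 cyc_nth smat_nth)

lemma cyc_mem_cyc_torus_proportional:
  assumes "cyc s \<in> cyc_torus t"
  obtains a where "\<And>j. s j = a * t j"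
proof -
  obtain a b where e: "cyc s = smat a (cyc t) + smat b (cyc t ** cyc t)"
    using assms by (auto simp: cyc_torus_def span2_def)
  have "cyc s $2$1 = (smat a (cyc t) + smat b (cyc t ** cyc t))$2$1"
    "cyc s $3$2 = (smat a (cyc t) + smat b (cyc t ** cyc t))$3$2"
    "cyc s $1$3 = (smat a (cyc t) + smat b (cyc t ** cyc t))$1$3" using e by simp_all
  hence "s 1 = a * t 1" "s 2 = a * t 2" "s 3 = a * t 3" by (simp_all add: mm3 cyc_nth smat_nth)
  hence "s j = a * t j" for j using exhaust_3[of j] by auto
  thus ?thesis using that by blast
qed

lemma cyc_torus_scale:
  assumes "c \<noteq> 0"
  shows "cyc_torus (\<lambda>j. c * s j) = cyc_torus s"
proof -
  have "cyc (\<lambda>j. c * s j) = smat c (cyc s)" by (simp add: cyc_def smat_def vec_eq_iff)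
  thus ?thesis using assms
    by (simp add: cyc_torus_def smat_mult_left smat_mult_right smat_smat span2_scale)
qed

text \<open>The weights of $\mathrm{diag}(\delta)\, \mathrm{cyc}(s)\, \mathrm{diag}(\delta)^{-1}$.\<close>
definition rescale :: "(3 \<Rightarrow> 'a::field) \<Rightarrow> (3 \<Rightarrow> 'a) \<Rightarrow> 3 \<Rightarrow> 'a" where
  "rescale \<delta> s = (\<lambda>j. if j = 1 then s 1 * \<delta> 2 / \<delta> 1 else if j = 2 then s 2 * \<delta> 3 / \<delta> 2 else s 3 * \<delta> 1 / \<delta> 3)"

lemma rescale_prod: "\<forall>j. \<delta> j \<noteq> 0 \<Longrightarrow> rescale \<delta> s 1 * rescale \<delta> s 2 * rescale \<delta> s 3 = s 1 * s 2 * s 3"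
  by (simp add: rescale_def field_simps)

lemma conj_diag_mat_cyc_torus:
  assumes nz: "\<forall>j. \<delta> j \<noteq> (0::'a::field)"
  shows "(\<lambda>x. diag_mat \<delta> ** x ** diag_mat (\<lambda>j. 1 / \<delta> j)) ` cyc_torus s = cyc_torus (rescale \<delta> s)"
proof -
  have inv: "diag_mat (\<lambda>j. 1 / \<delta> j) ** diag_mat \<delta> = (mat 1 :: 'a m3)"
    using diag_mat_inverse[of "\<lambda>j. 1 / \<delta> j"] nz by simp
  have cyc: "diag_mat \<delta> ** cyc s ** diag_mat (\<lambda>j. 1 / \<delta> j) = cyc (rescale \<delta> s)"
    unfolding vec_eq_iff forall_3 using nz by (simp add: mm3 diag_mat_nth cyc_nth rescale_def)
  hence "diag_mat \<delta> ** (cyc s ** cyc s) ** diag_mat (\<lambda>j. 1 / \<delta> j) = cyc (rescale \<delta> s) ** cyc (rescale \<delta> s)"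
    by (simp flip: conj_mult[OF inv])
  thus ?thesis using cyc by (simp add: cyc_torus_def image_conj_span2)
qed

text \<open>A primitive cube root of unity; it exists as the field is algebraically closed.\<close>
definition omega :: "'a::field" where
  "omega = (SOME w. w * w + w + 1 = 0)"

lemma omega_minimal_poly: "omega * omega + omega + (1::'a::alg_closed_field) = 0"
proof -
  have "\<exists>x::'a. (\<Sum>k\<le>2. (\<lambda>_. 1) k * x^k) = 0" by (rule alg_closed) auto
  hence "\<exists>x::'a. x * x + x + 1 = 0" by (simp add: eval_nat_numeral algebra_simps)
  thus ?thesis unfolding omega_def by (rule someI_ex)
qed

definition omega_weights :: "3 \<Rightarrow> 'a::field" where
  "omega_weights = (\<lambda>j. if j = 1 then 1 else if j = 2 then omega else omega * omega)"

definition omega_sq_weights :: "3 \<Rightarrow> 'a::field" where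
  "omega_sq_weights = (\<lambda>j. if j = 1 then 1 else if j = 2 then omega * omega else omega)"

lemma orthogonal_cyc_torus_ones:
  fixes s :: "3 \<Rightarrow> 'a::alg_closed_field"
  assumes orth: "\<forall>x\<in>cyc_torus (\<lambda>_. 1). \<forall>y\<in>cyc_torus s. trace (x ** y) = 0"
    and prod: "s 1 * s 2 * s 3 = 1"
  shows "cyc_torus s = cyc_torus omega_weights \<or> cyc_torus s = cyc_torus omega_sq_weights"
proof -
  have e1: "s 1 + s 2 + s 3 = 0" and e2: "s 1 * s 2 + s 2 * s 3 + s 3 * s 1 = 0"
    using cyc_torus_orthogonal_pairing[OF orth] by (simp_all add: cyc_pairing_def algebra_simps)
  have w: "omega * omega + omega + (1::'a) = 0" by (rule omega_minimal_poly)
  have s1: "s 1 \<noteq> 0" using prod by auto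
  have "(s 2 - s 1 * omega) * (s 2 - s 1 * (omega * omega)) = 0" using e1 e2 w by algebra
  hence "s = (\<lambda>j. s 1 * omega_weights j) \<or> s = (\<lambda>j. s 1 * omega_sq_weights j)"
  proof (elim mult_eq_0_iff[THEN iffD1, elim_format] disjE)
    assume "s 2 - s 1 * omega = 0"
    moreover from this have "s 3 = s 1 * (omega * omega)" using e1 w by algebra
    ultimately show ?thesis by (simp add: fun_eq_iff forall_3 omega_weights_def)
  next
    assume "s 2 - s 1 * (omega * omega) = 0"
    moreover from this have "s 3 = s 1 * omega" using e1 w by algebra
    ultimately show ?thesis by (simp add: fun_eq_iff forall_3 omega_sq_weights_def)
  qed
  thus ?thesis using cyc_torus_scale[OF s1] by metis
qed

definition swap23 :: "bool \<Rightarrow> nat \<Rightarrow> nat" where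
  "swap23 b i = (if b \<and> i = 2 then 3 else if b \<and> i = 3 then 2 else i)"

lemma swap23_involutive: "swap23 b (swap23 b i) = i"
  by (simp add: swap23_def)

lemma swap23_le_3: "i \<le> 3 \<Longrightarrow> swap23 b i \<le> 3"
  by (simp add: swap23_def)

definition std_component :: "nat \<Rightarrow> 'a::alg_closed_field m3 set" where
  "std_component i = (if i = 0 then diag_sl else if i = 1 then cyc_torus (\<lambda>_. 1)
     else if i = 2 then cyc_torus omega_weights else cyc_torus omega_sq_weights)"

lemma std_component_inj:
  assumes three: "(3::'a::alg_closed_field) \<noteq> 0" and "i \<le> 3" "j \<le> 3"
    and eq: "(std_component i :: 'a m3 set) = std_component j"
  shows "i = j"
proof -
  have w: "omega * omega + omega + (1::'a) = 0" by (rule omega_minimal_poly)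
  have w1: "omega \<noteq> (1::'a)" using w three by auto
  have w2: "omega * omega \<noteq> (1::'a)"
  proof
    assume sq: "omega * omega = (1::'a)"
    hence "(omega::'a) = -2" using w by (simp add: algebra_simps) algebra
    hence "(-2) * (-2) = (1::'a)" using sq by simp
    hence "(3::'a) + 1 = 0 + 1" by simp
    hence "(3::'a) = 0" by (rule add_right_imp_eq)
    thus False using three by simp
  qed
  have w3: "omega * omega \<noteq> (omega::'a)"
  proof
    assume "omega * omega = (omega::'a)"
    hence "(omega::'a) * (omega - 1) = 0" by (simp add: right_diff_distrib)
    thus False using w w1 by auto
  qed
  have "diag_sl \<noteq> cyc_torus (s :: 3 \<Rightarrow> 'a)" for s
    using diag_sl_generators(1) cyc_torus_zero_diagonal[of _ s 1] by (force simp: diag_mat_nth)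
  moreover have "cyc_torus s \<noteq> cyc_torus t" if "s 1 = t 1" "t 1 \<noteq> 0" "s 2 \<noteq> t 2" for s t :: "3 \<Rightarrow> 'a"
  proof
    assume "cyc_torus s = cyc_torus t"
    then obtain a where a: "\<And>j. s j = a * t j"
      using cyc_mem_cyc_torus(1)[of s] cyc_mem_cyc_torus_proportional by metis
    thus False using that a[of 1] a[of 2] by simp
  qed
  hence "cyc_torus (\<lambda>_. 1) \<noteq> cyc_torus (omega_weights :: 3 \<Rightarrow> 'a)"
    "cyc_torus (\<lambda>_. 1) \<noteq> cyc_torus (omega_sq_weights :: 3 \<Rightarrow> 'a)"
    "cyc_torus (omega_weights :: 3 \<Rightarrow> 'a) \<noteq> cyc_torus omega_sq_weights"
    using w1 w2 w3 by (auto simp: omega_weights_def omega_sq_weights_def)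
  moreover have "i = 0 \<or> i = 1 \<or> i = 2 \<or> i = 3" "j = 0 \<or> j = 1 \<or> j = 2 \<or> j = 3"
    using assms(2,3) by arith+
  ultimately show ?thesis using eq by (auto simp: std_component_def dest: sym)
qed

lemma orthogonal_tori_std_form:
  fixes K :: "nat \<Rightarrow> 'a::alg_closed_field m3 set" and r :: "nat \<Rightarrow> 3 \<Rightarrow> 'a"
  assumes three: "(3::'a) \<noteq> 0" and K0: "K 0 = diag_sl"
    and Kr: "\<And>i. 1 \<le> i \<Longrightarrow> i \<le> 3 \<Longrightarrow> K i = cyc_torus (r i) \<and> r i 1 * r i 2 * r i 3 = 1"
    and orth: "\<And>i j. i \<le> 3 \<Longrightarrow> j \<le> 3 \<Longrightarrow> i \<noteq> j \<Longrightarrow> \<forall>x\<in>K i. \<forall>y\<in>K j. trace (x ** y) = 0"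
  obtains \<delta> b where "\<forall>j. \<delta> j \<noteq> 0"
    "\<And>i. i \<le> 3 \<Longrightarrow> (\<lambda>x. diag_mat \<delta> ** x ** diag_mat (\<lambda>j. 1 / \<delta> j)) ` K i = std_component (swap23 b i)"
proof -
  have r1: "r 1 1 \<noteq> 0" "r 1 2 \<noteq> 0" "r 1 1 * r 1 2 * r 1 3 = 1" using Kr[of 1] by auto
  \<comment> \<open>The diagonal conjugation that rescales the weights of K 1 to $(1, 1, 1)$.\<close>
  define \<delta> :: "3 \<Rightarrow> 'a" where
    "\<delta> = (\<lambda>j. if j = 1 then 1 else if j = 2 then 1 / r 1 1 else 1 / (r 1 1 * r 1 2))"
  have nz: "\<forall>j. \<delta> j \<noteq> 0" using r1 by (simp add: \<delta>_def)
  define L where "L i = (\<lambda>x. diag_mat \<delta> ** x ** diag_mat (\<lambda>j. 1 / \<delta> j)) ` K i" for i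
  have L0: "L 0 = std_component 0" using conj_diag_mat_diag_sl[OF nz] by (simp add: L_def K0 std_component_def)
  have "rescale \<delta> (r 1) = (\<lambda>_. 1)"
    using r1 by (auto simp: fun_eq_iff forall_3 rescale_def \<delta>_def field_simps)
  hence L1: "L 1 = std_component 1"
    using conj_diag_mat_cyc_torus[OF nz] Kr[of 1] by (simp add: L_def std_component_def)
  have L: "L i = cyc_torus (rescale \<delta> (r i))" "rescale \<delta> (r i) 1 * rescale \<delta> (r i) 2 * rescale \<delta> (r i) 3 = 1"
    if "1 \<le> i" "i \<le> 3" for i
    using Kr[OF that] conj_diag_mat_cyc_torus[OF nz] rescale_prod[OF nz] by (simp_all add: L_def)
  have "diag_mat (\<lambda>j. 1 / \<delta> j) ** diag_mat \<delta> = (mat 1 :: 'a m3)"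
    using diag_mat_inverse[of "\<lambda>j. 1 / \<delta> j"] nz by simp
  hence Lorth: "\<forall>x\<in>L i. \<forall>y\<in>L j. trace (x ** y) = 0" if "i \<le> 3" "j \<le> 3" "i \<noteq> j" for i j
    unfolding L_def using image_conj_trace_orthogonal orth[OF that] by blast
  have std: "L i = std_component 2 \<or> L i = std_component 3" if "i = 2 \<or> i = 3" for i
    using orthogonal_cyc_torus_ones[of "rescale \<delta> (r i)"] Lorth[of 1 i] L[of i] L1 that
    by (auto simp: std_component_def)
  have "L 2 \<noteq> L 3"
    using Lorth[of 2 3] L[of 2] cyc_torus_not_self_orthogonal three by force
  then obtain b where b: "L 2 = std_component (swap23 b 2)" "L 3 = std_component (swap23 b 3)"
    using std[of 2] std[of 3] by (metis swap23_def)
  have "L i = std_component (swap23 b i)" if "i \<le> 3" for i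
  proof -
    have "i = 0 \<or> i = 1 \<or> i = 2 \<or> i = 3" using that by arith
    thus ?thesis using L0 L1 b by (auto simp: swap23_def)
  qed
  thus ?thesis using that nz unfolding L_def by blast
qed

section \<open>Uniqueness of the orthogonal decomposition\<close>

lemma COD_trace_orthogonal:
  fixes H :: "nat \<Rightarrow> 'a::field m3 set"
  assumes "COD H" "CHAR('a) > 3" "i \<le> 3" "j \<le> 3" "i \<noteq> j" "x \<in> H i" "y \<in> H j"
  shows "trace (x ** y) = 0"
proof -
  have "\<forall>i\<le>CARD(3). \<forall>j\<le>CARD(3). i \<noteq> j \<longrightarrow> (\<forall>x\<in>H i. \<forall>y\<in>H j. killing x y = 0)"
    using conjunct2[OF conjunct2[OF assms(1)[unfolded COD_def]]] .
  hence "killing x y = 0" using assms(3-7) by simp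
  hence "2 * 3 * trace (x ** y) = 0" by (simp add: killing_def)
  thus ?thesis using two_three_nonzero_if_char_gt_3[OF assms(2)] by (metis mult_eq_0_iff)
qed

lemma COD_components_conj_diag_sl:
  fixes H :: "nat \<Rightarrow> 'a::field m3 set"
  assumes "COD H" "CHAR('a) > 3"
  obtains G G' :: "nat \<Rightarrow> 'a m3"
  where "\<And>i. i \<le> 3 \<Longrightarrow> G i ** G' i = mat 1 \<and> G' i ** G i = mat 1 \<and> H i = (\<lambda>d. G i ** d ** G' i) ` diag_sl"
proof -
  have "\<exists>g g' :: 'a m3. i \<le> 3 \<longrightarrow> g ** g' = mat 1 \<and> g' ** g = mat 1 \<and> H i = (\<lambda>d. g ** d ** g') ` diag_sl" for i
  proof (cases "i \<le> 3")
    case True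
    hence "classical_cartan (H i)" using conjunct1[OF assms(1)[unfolded COD_def]] by simp
    then obtain g g' :: "'a m3" where "g ** g' = mat 1" "g' ** g = mat 1" "H i = (\<lambda>d. g ** d ** g') ` diag_sl"
      using classical_cartan_conj_diag_sl two_three_nonzero_if_char_gt_3[OF assms(2)] by metis
    thus ?thesis by blast
  qed simp
  from choice[OF allI[OF this]] obtain G :: "nat \<Rightarrow> 'a m3"
    where "\<forall>i. \<exists>g'. i \<le> 3 \<longrightarrow> G i ** g' = mat 1 \<and> g' ** G i = mat 1 \<and> H i = (\<lambda>d. G i ** d ** g') ` diag_sl" ..
  from choice[OF this] obtain G' :: "nat \<Rightarrow> 'a m3"
    where "\<forall>i. i \<le> 3 \<longrightarrow> G i ** G' i = mat 1 \<and> G' i ** G i = mat 1 \<and> H i = (\<lambda>d. G i ** d ** G' i) ` diag_sl" ..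
  thus ?thesis using that[of G G'] by blast
qed

lemma COD_conj_trace_orthogonal:
  fixes H :: "nat \<Rightarrow> 'a::field m3 set" and g g' :: "'a m3"
  assumes "COD H" "CHAR('a) > 3" "g' ** g = mat 1" "i \<le> 3" "j \<le> 3" "i \<noteq> j"
  shows "\<forall>x\<in>(\<lambda>x. g ** x ** g') ` H i. \<forall>y\<in>(\<lambda>x. g ** x ** g') ` H j. trace (x ** y) = 0"
  using image_conj_trace_orthogonal[OF assms(3)] COD_trace_orthogonal[OF assms(1,2,4-6)] by blast

lemma COD_conj_cyc_tori:
  fixes H :: "nat \<Rightarrow> 'a::field m3 set"
  assumes cod: "COD H" and ch: "CHAR('a) > 3"
  obtains g g' :: "'a m3" and r :: "nat \<Rightarrow> 3 \<Rightarrow> 'a"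
  where "g ** g' = mat 1" "g' ** g = mat 1" "(\<lambda>x. g ** x ** g') ` H 0 = diag_sl"
    "\<And>i. 1 \<le> i \<Longrightarrow> i \<le> 3 \<Longrightarrow> (\<lambda>x. g ** x ** g') ` H i = cyc_torus (r i) \<and> r i 1 * r i 2 * r i 3 = 1"
proof -
  have three: "(3::'a) \<noteq> 0" using two_three_nonzero_if_char_gt_3[OF ch] by simp
  obtain G G' :: "nat \<Rightarrow> 'a m3" where G: "\<And>i. i \<le> 3 \<Longrightarrow> G i ** G' i = mat 1 \<and> G' i ** G i = mat 1
      \<and> H i = (\<lambda>d. G i ** d ** G' i) ` diag_sl"
    using COD_components_conj_diag_sl[OF cod ch] by metis
  \<comment> \<open>Move H 0 to the diagonal torus; the other components become tori orthogonal to it.\<close>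
  define g where "g = G' 0"
  define g' where "g' = G 0"
  have gg: "g ** g' = mat 1" "g' ** g = mat 1" using G[of 0] by (simp_all add: g_def g'_def)
  have H0: "(\<lambda>x. g ** x ** g') ` H 0 = diag_sl"
    using G[of 0] image_conj_cancel[of "G' 0" "G 0"] by (simp add: g_def g'_def)
  have "\<exists>r. 1 \<le> i \<and> i \<le> 3 \<longrightarrow> (\<lambda>x. g ** x ** g') ` H i = cyc_torus r \<and> r 1 * r 2 * r 3 = 1" for i
  proof (cases "1 \<le> i \<and> i \<le> 3")
    case True
    let ?a = "g ** G i" and ?a' = "G' i ** g'"
    have Hi: "(\<lambda>x. g ** x ** g') ` H i = (\<lambda>x. ?a ** x ** ?a') ` diag_sl"
      using G True by (simp add: image_conj_conj)
    have "?a ** ?a' = mat 1" "?a' ** ?a = mat 1"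
      using inverse_mult[of g g' "G i" "G' i"] inverse_mult[of "G' i" "G i" g' g] gg G[of i] True
      by simp_all
    moreover have "\<forall>x\<in>(\<lambda>d. ?a ** d ** ?a') ` diag_sl. \<forall>y\<in>diag_sl. trace (x ** y) = 0"
      using COD_conj_trace_orthogonal[OF cod ch gg(2), of i 0] True Hi H0 by simp
    ultimately obtain r where "r 1 * r 2 * r 3 = 1" "(\<lambda>d. ?a ** d ** ?a') ` diag_sl = cyc_torus r"
      using orthogonal_conj_diag_sl_cyc_torus three by blast
    thus ?thesis using Hi by blast
  qed blast
  from choice[OF allI[OF this]] obtain r where "\<forall>i. 1 \<le> i \<and> i \<le> 3 \<longrightarrow>
      (\<lambda>x. g ** x ** g') ` H i = cyc_torus (r i) \<and> r i 1 * r i 2 * r i 3 = 1" ..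
  thus ?thesis using that[OF gg H0, of r] by blast
qed

lemma COD_std_form:
  fixes H :: "nat \<Rightarrow> 'a::alg_closed_field m3 set"
  assumes cod: "COD H" and ch: "CHAR('a) > 3"
  obtains g g' :: "'a m3" and b where "g ** g' = mat 1" "g' ** g = mat 1"
    "\<And>i. i \<le> 3 \<Longrightarrow> (\<lambda>x. g ** x ** g') ` H i = std_component (swap23 b i)"
proof -
  have three: "(3::'a) \<noteq> 0" using two_three_nonzero_if_char_gt_3[OF ch] by simp
  obtain k k' :: "'a m3" and r where kk: "k ** k' = mat 1" "k' ** k = mat 1"
    and H0: "(\<lambda>x. k ** x ** k') ` H 0 = diag_sl"
    and Hr: "\<And>i. 1 \<le> i \<Longrightarrow> i \<le> 3 \<Longrightarrow> (\<lambda>x. k ** x ** k') ` H i = cyc_torus (r i) \<and> r i 1 * r i 2 * r i 3 = 1"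
    using COD_conj_cyc_tori[OF cod ch] by blast
  from orthogonal_tori_std_form[where K = "\<lambda>i. (\<lambda>x. k ** x ** k') ` H i" and r = r,
      OF three H0 Hr COD_conj_trace_orthogonal[OF cod ch kk(2)]]
  obtain \<delta> b where \<delta>: "\<forall>j. \<delta> j \<noteq> 0" and std: "\<And>i. i \<le> 3 \<Longrightarrow>
      (\<lambda>x. diag_mat \<delta> ** x ** diag_mat (\<lambda>j. 1 / \<delta> j)) ` (\<lambda>x. k ** x ** k') ` H i = std_component (swap23 b i)"
    by blast
  define g where "g = diag_mat \<delta> ** k"
  define g' where "g' = k' ** diag_mat (\<lambda>j. 1 / \<delta> j)"
  have "diag_mat \<delta> ** diag_mat (\<lambda>j. 1 / \<delta> j) = mat 1" "diag_mat (\<lambda>j. 1 / \<delta> j) ** diag_mat \<delta> = mat 1"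
    using diag_mat_inverse[of \<delta>] diag_mat_inverse[of "\<lambda>j. 1 / \<delta> j"] \<delta> by simp_all
  hence "g ** g' = mat 1" "g' ** g = mat 1"
    using inverse_mult[of "diag_mat \<delta>" "diag_mat (\<lambda>j. 1 / \<delta> j)" k k']
      inverse_mult[of k' k "diag_mat (\<lambda>j. 1 / \<delta> j)" "diag_mat \<delta>"] kk
    by (simp_all add: g_def g'_def)
  moreover have "(\<lambda>x. g ** x ** g') ` H i = std_component (swap23 b i)" if "i \<le> 3" for i
    using std[OF that] by (simp add: g_def g'_def image_conj_conj)
  ultimately show ?thesis using that by blast
qed

lemma COD_conjugate_if_std_forms:
  fixes H H' :: "nat \<Rightarrow> 'a::alg_closed_field m3 set" and g g' h h' :: "'a m3"
  assumes three: "(3::'a) \<noteq> 0"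
    and g: "g ** g' = mat 1" "g' ** g = mat 1" "\<And>i. i \<le> 3 \<Longrightarrow> (\<lambda>x. g ** x ** g') ` H i = std_component (swap23 b i)"
    and h: "h ** h' = mat 1" "h' ** h = mat 1" "\<And>i. i \<le> 3 \<Longrightarrow> (\<lambda>x. h ** x ** h') ` H' i = std_component (swap23 c i)"
  shows "COD_conjugate H H'"
  unfolding COD_conjugate_def
proof (intro exI conjI allI impI)
  define a where "a = h' ** g"
  define a' where "a' = g' ** h"
  have "a ** a' = mat 1" "a' ** a = mat 1"
    using inverse_mult[of h' h g g'] inverse_mult[of g' g h h'] g h by (simp_all add: a_def a'_def)
  thus "lie_automorphism (\<lambda>x. a ** x ** a')" by (rule conj_lie_automorphism)
  have image: "(\<lambda>x. a ** x ** a') ` H i = (\<lambda>x. h' ** x ** h) ` std_component (swap23 b i)" if "i \<le> 3" for i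
  proof -
    have "(\<lambda>x. a ** x ** a') ` H i = (\<lambda>x. h' ** x ** h) ` (\<lambda>x. g ** x ** g') ` H i"
      by (simp add: a_def a'_def image_conj_conj)
    thus ?thesis using g(3)[OF that] by simp
  qed
  have H': "H' j = (\<lambda>x. h' ** x ** h) ` std_component (swap23 c j)" if "j \<le> 3" for j
    using h(3)[OF that] image_conj_cancel[OF h(2), of "H' j"] by simp
  fix i :: nat assume "i \<le> CARD(3)"
  hence i: "i \<le> 3" by simp
  show "\<exists>!j. j \<le> CARD(3) \<and> (\<lambda>x. a ** x ** a') ` H i = H' j"
  proof (rule ex1I[of _ "swap23 c (swap23 b i)"])
    show "swap23 c (swap23 b i) \<le> CARD(3) \<and> (\<lambda>x. a ** x ** a') ` H i = H' (swap23 c (swap23 b i))"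
      using image[OF i] H' i swap23_le_3 by (simp add: swap23_involutive)
  next
    fix k assume k: "k \<le> CARD(3) \<and> (\<lambda>x. a ** x ** a') ` H i = H' k"
    hence "std_component (swap23 c k) = (\<lambda>x. h ** x ** h') ` (\<lambda>x. a ** x ** a') ` H i"
      using h(3) by simp
    also have "\<dots> = std_component (swap23 b i)"
      using image[OF i] image_conj_cancel[OF h(1)] by simp
    finally have "swap23 c k = swap23 b i"
      using std_component_inj[OF three] swap23_le_3 i k by simp
    thus "k = swap23 c (swap23 b i)" by (metis swap23_involutive)
  qed
qed

theorem theorem3p8:
  fixes H H' :: "nat \<Rightarrow> ('a::alg_closed_field ^ 3 ^ 3) set"
  assumes "CHAR('a) > 3"
    and "COD H" and "COD H'"
  shows "COD_conjugate H H'"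
proof -
  have three: "(3::'a) \<noteq> 0" using two_three_nonzero_if_char_gt_3[OF assms(1)] by simp
  obtain g g' :: "'a^3^3" and b where g: "g ** g' = mat 1" "g' ** g = mat 1"
    "\<And>i. i \<le> 3 \<Longrightarrow> (\<lambda>x. g ** x ** g') ` H i = std_component (swap23 b i)"
    using COD_std_form[OF assms(2,1)] by metis
  obtain h h' :: "'a^3^3" and c where h: "h ** h' = mat 1" "h' ** h = mat 1"
    "\<And>i. i \<le> 3 \<Longrightarrow> (\<lambda>x. h ** x ** h') ` H' i = std_component (swap23 c i)"
    using COD_std_form[OF assms(3,1)] by metis
  show ?thesis using COD_conjugate_if_std_forms[OF three g h] .
qed

end
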